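(* Let $\mathsf V$ be a pseudovariety of semigroupoids containing $\mathsf{Sl}$, $A$ a finite-vertex graph, and $B$ a retract subgraph of $A$. Then, identifying $\overline{\Omega}_B\mathsf V$ with its image in $\overline{\Omega}_A\mathsf V$ under the (injective) continuous homomorphism induced by the inclusion $B\to A$, the set $\overline{\Omega}_B\mathsf V$ is open in $\overline{\Omega}_A\mathsf V$.
   Context: A graph has vertices, edges and source/range maps; finite-vertex means finitely many vertices. A pseudovariety of semigroupoids is a class of finite semigroupoids closed under divisors, finite direct products and finite coproducts; $\mathsf{Sl}$ is the pseudovariety of finite semilattices. $\overline{\Omega}_A\mathsf V$ denotes the free pro-$\mathsf V$ semigroupoid over the finite-vertex graph $A$. A subgraph $B$ of $A$ is a retract subgraph if there is an onto graph morphism $r\colon A\to B$ with $r\circ i=\mathrm{id}_B$, where $i\colon B\to A$ is the inclusion; then the induced continuous homomorphism $\overline{\Omega}_B\mathsf V\to\overline{\Omega}_A\mathsf V$ is injective. *)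

theory Defs
  imports "HOL-Analysis.Analysis"
begin

record ('v, 'e) graph =
  gV :: "'v set"
  gE :: "'e set"
  gsrc :: "'e \<Rightarrow> 'v"
  gtgt :: "'e \<Rightarrow> 'v"

definition wf_graph :: "('v, 'e) graph \<Rightarrow> bool" where
  "wf_graph A \<longleftrightarrow> (\<forall>e\<in>gE A. gsrc A e \<in> gV A \<and> gtgt A e \<in> gV A)"

definition finite_vertex_graph :: "('v, 'e) graph \<Rightarrow> bool" where
  "finite_vertex_graph A \<longleftrightarrow> wf_graph A \<and> finite (gV A)"

definition subgraph :: "('v, 'e) graph \<Rightarrow> ('v, 'e) graph \<Rightarrow> bool" where
  "subgraph B A \<longleftrightarrow> wf_graph B \<and> gV B \<subseteq> gV A \<and> gE B \<subseteq> gE A \<and>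
     (\<forall>e\<in>gE B. gsrc B e = gsrc A e \<and> gtgt B e = gtgt A e)"

text \<open>Graph morphisms between graphs (pairs of vertex map and edge map, only their
  behaviour on the carriers matters).\<close>
definition graph_mor :: "('v, 'e) graph \<Rightarrow> ('w, 'f) graph \<Rightarrow> ('v \<Rightarrow> 'w) \<times> ('e \<Rightarrow> 'f) \<Rightarrow> bool" where
  "graph_mor A B r \<longleftrightarrow>
     (\<forall>x\<in>gV A. fst r x \<in> gV B) \<and>
     (\<forall>e\<in>gE A. snd r e \<in> gE B \<and> gsrc B (snd r e) = fst r (gsrc A e) \<and>
                gtgt B (snd r e) = fst r (gtgt A e))"

definition retract_subgraph :: "('v, 'e) graph \<Rightarrow> ('v, 'e) graph \<Rightarrow> bool" where
  "retract_subgraph B A \<longleftrightarrow> subgraph B A \<and>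
     (\<exists>r. graph_mor A B r \<and> fst r ` gV A = gV B \<and> snd r ` gE A = gE B \<and>
          (\<forall>x\<in>gV B. fst r x = x) \<and> (\<forall>e\<in>gE B. snd r e = e))"

text \<open>Edges compose as paths: comp s t is defined when the range of s is the source of t.\<close>
record ('v, 'e) sgd =
  sV :: "'v set"
  sE :: "'e set"
  ssrc :: "'e \<Rightarrow> 'v"
  stgt :: "'e \<Rightarrow> 'v"
  scomp :: "'e \<Rightarrow> 'e \<Rightarrow> 'e"

definition semigroupoid :: "('v, 'e) sgd \<Rightarrow> bool" where
  "semigroupoid S \<longleftrightarrow>
     (\<forall>e\<in>sE S. ssrc S e \<in> sV S \<and> stgt S e \<in> sV S) \<and>
     (\<forall>s\<in>sE S. \<forall>t\<in>sE S. stgt S s = ssrc S t \<longrightarrow>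
        scomp S s t \<in> sE S \<and> ssrc S (scomp S s t) = ssrc S s \<and> stgt S (scomp S s t) = stgt S t) \<and>
     (\<forall>s\<in>sE S. \<forall>t\<in>sE S. \<forall>u\<in>sE S. stgt S s = ssrc S t \<longrightarrow> stgt S t = ssrc S u \<longrightarrow>
        scomp S (scomp S s t) u = scomp S s (scomp S t u))"

definition finite_sgd :: "('v, 'e) sgd \<Rightarrow> bool" where
  "finite_sgd S \<longleftrightarrow> semigroupoid S \<and> finite (sV S) \<and> finite (sE S)"

definition ugraph :: "('v, 'e) sgd \<Rightarrow> ('v, 'e) graph" where
  "ugraph S = \<lparr>gV = sV S, gE = sE S, gsrc = ssrc S, gtgt = stgt S\<rparr>"

definition sgd_hom :: "('v, 'e) sgd \<Rightarrow> ('w, 'f) sgd \<Rightarrow> ('v \<Rightarrow> 'w) \<times> ('e \<Rightarrow> 'f) \<Rightarrow> bool" where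
  "sgd_hom S T h \<longleftrightarrow> graph_mor (ugraph S) (ugraph T) h \<and>
     (\<forall>s\<in>sE S. \<forall>t\<in>sE S. stgt S s = ssrc S t \<longrightarrow>
        snd h (scomp S s t) = scomp T (snd h s) (snd h t))"

definition sgd_iso :: "('v, 'e) sgd \<Rightarrow> ('w, 'f) sgd \<Rightarrow> bool" where
  "sgd_iso S T \<longleftrightarrow> (\<exists>h. sgd_hom S T h \<and> bij_betw (fst h) (sV S) (sV T) \<and>
                        bij_betw (snd h) (sE S) (sE T))"

definition sub_sgd :: "('v, 'e) sgd \<Rightarrow> ('v, 'e) sgd \<Rightarrow> bool" where
  "sub_sgd R T \<longleftrightarrow> semigroupoid R \<and> sV R \<subseteq> sV T \<and> sE R \<subseteq> sE T \<and>
     (\<forall>e\<in>sE R. ssrc R e = ssrc T e \<and> stgt R e = stgt T e) \<and>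
     (\<forall>s\<in>sE R. \<forall>t\<in>sE R. stgt R s = ssrc R t \<longrightarrow> scomp R s t = scomp T s t)"

definition sgd_divides :: "('v, 'e) sgd \<Rightarrow> ('w, 'f) sgd \<Rightarrow> bool" where
  "sgd_divides S T \<longleftrightarrow> (\<exists>R h. sub_sgd R T \<and> sgd_hom R S h \<and>
      fst h ` sV R = sV S \<and> snd h ` sE R = sE S)"

definition sgd_prod :: "('v, 'e) sgd \<Rightarrow> ('w, 'f) sgd \<Rightarrow> ('v \<times> 'w, 'e \<times> 'f) sgd" where
  "sgd_prod S T = \<lparr>sV = sV S \<times> sV T, sE = sE S \<times> sE T,
     ssrc = (\<lambda>(s, t). (ssrc S s, ssrc T t)), stgt = (\<lambda>(s, t). (stgt S s, stgt T t)),
     scomp = (\<lambda>(s, t) (s', t'). (scomp S s s', scomp T t t'))\<rparr>"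

definition sgd_coprod :: "('v, 'e) sgd \<Rightarrow> ('w, 'f) sgd \<Rightarrow> ('v + 'w, 'e + 'f) sgd" where
  "sgd_coprod S T = \<lparr>sV = Inl ` sV S \<union> Inr ` sV T, sE = Inl ` sE S \<union> Inr ` sE T,
     ssrc = case_sum (\<lambda>s. Inl (ssrc S s)) (\<lambda>t. Inr (ssrc T t)),
     stgt = case_sum (\<lambda>s. Inl (stgt S s)) (\<lambda>t. Inr (stgt T t)),
     scomp = (\<lambda>x y. case (x, y) of (Inl s, Inl s') \<Rightarrow> Inl (scomp S s s')
                                 | (Inr t, Inr t') \<Rightarrow> Inr (scomp T t t')
                                 | _ \<Rightarrow> undefined)\<rparr>"

text \<open>A pseudovariety of semigroupoids, represented (up to isomorphism) by its members
  whose vertices and edges are natural numbers (every finite semigroupoid has such a copy).\<close>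
definition pseudovariety :: "(nat, nat) sgd set \<Rightarrow> bool" where
  "pseudovariety \<V> \<longleftrightarrow>
     (\<forall>S\<in>\<V>. finite_sgd S) \<and>
     (\<forall>S T. S \<in> \<V> \<longrightarrow> finite_sgd T \<longrightarrow> sgd_iso S T \<longrightarrow> T \<in> \<V>) \<and>
     (\<forall>S T. T \<in> \<V> \<longrightarrow> finite_sgd S \<longrightarrow> sgd_divides S T \<longrightarrow> S \<in> \<V>) \<and>
     (\<forall>S T P. S \<in> \<V> \<longrightarrow> T \<in> \<V> \<longrightarrow> finite_sgd P \<longrightarrow> sgd_iso (sgd_prod S T) P \<longrightarrow> P \<in> \<V>) \<and>
     (\<forall>S T P. S \<in> \<V> \<longrightarrow> T \<in> \<V> \<longrightarrow> finite_sgd P \<longrightarrow> sgd_iso (sgd_coprod S T) P \<longrightarrow> P \<in> \<V>) \<and>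
     (\<forall>P. finite_sgd P \<longrightarrow> card (sV P) = 1 \<longrightarrow> card (sE P) = 1 \<longrightarrow> P \<in> \<V>)"

definition is_semilattice_sgd :: "('v, 'e) sgd \<Rightarrow> bool" where
  "is_semilattice_sgd S \<longleftrightarrow> finite_sgd S \<and> card (sV S) = 1 \<and> sE S \<noteq> {} \<and>
     (\<forall>s\<in>sE S. \<forall>t\<in>sE S. scomp S s t = scomp S t s) \<and> (\<forall>s\<in>sE S. scomp S s s = s)"

definition contains_Sl :: "(nat, nat) sgd set \<Rightarrow> bool" where
  "contains_Sl \<V> \<longleftrightarrow> (\<forall>S. is_semilattice_sgd S \<longrightarrow> S \<in> \<V>)"

type_synonym ('v, 'e) gmap = "('v \<Rightarrow> nat) \<times> ('e \<Rightarrow> nat)"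

definition idx :: "(nat, nat) sgd set \<Rightarrow> ('v, 'e) graph \<Rightarrow> ((nat, nat) sgd \<times> ('v, 'e) gmap) set" where
  "idx \<V> A = {(S, \<phi>). S \<in> \<V> \<and> graph_mor A (ugraph S) \<phi>}"

definition agree_on :: "('v, 'e) graph \<Rightarrow> ('v, 'e) gmap \<Rightarrow> ('v, 'e) gmap \<Rightarrow> bool" where
  "agree_on A \<phi> \<psi> \<longleftrightarrow> (\<forall>x\<in>gV A. fst \<phi> x = fst \<psi> x) \<and> (\<forall>e\<in>gE A. snd \<phi> e = snd \<psi> e)"

definition hcomp :: "(nat \<Rightarrow> nat) \<times> (nat \<Rightarrow> nat) \<Rightarrow> ('v, 'e) gmap \<Rightarrow> ('v, 'e) gmap" where
  "hcomp h \<phi> = (fst h \<circ> fst \<phi>, snd h \<circ> snd \<phi>)"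

text \<open>An edge of the free pro-V semigroupoid over A is a triple (u, v, w): u, v are its
  source and range (vertices of A), and w assigns to each (S, phi) in the index set an edge
  w(S,phi) of S from phi(u) to phi(v), naturally in S (commuting with all homomorphisms
  between members of V), depending only on phi restricted to A, and undefined off the index set.\<close>
definition free_pro :: "(nat, nat) sgd set \<Rightarrow> ('v, 'e) graph \<Rightarrow>
    ('v \<times> 'v \<times> ((nat, nat) sgd \<times> ('v, 'e) gmap \<Rightarrow> nat)) set" where
  "free_pro \<V> A = {(u, v, w). u \<in> gV A \<and> v \<in> gV A \<and>
     w \<in> extensional (idx \<V> A) \<and>
     (\<forall>(S, \<phi>)\<in>idx \<V> A. w (S, \<phi>) \<in> sE S \<and> ssrc S (w (S, \<phi>)) = fst \<phi> u \<and>
                          stgt S (w (S, \<phi>)) = fst \<phi> v) \<and>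
     (\<forall>(S, \<phi>)\<in>idx \<V> A. \<forall>\<psi>. (S, \<psi>) \<in> idx \<V> A \<longrightarrow> agree_on A \<phi> \<psi> \<longrightarrow> w (S, \<phi>) = w (S, \<psi>)) \<and>
     (\<forall>(S, \<phi>)\<in>idx \<V> A. \<forall>T h. T \<in> \<V> \<longrightarrow> sgd_hom S T h \<longrightarrow>
        snd h (w (S, \<phi>)) = w (T, hcomp h \<phi>))}"

definition free_pro_top :: "(nat, nat) sgd set \<Rightarrow> ('v, 'e) graph \<Rightarrow>
    ('v \<times> 'v \<times> ((nat, nat) sgd \<times> ('v, 'e) gmap \<Rightarrow> nat)) topology" where
  "free_pro_top \<V> A = subtopology
     (prod_topology (discrete_topology (gV A)) (prod_topology (discrete_topology (gV A))
        (product_topology (\<lambda>(S, \<phi>). discrete_topology (sE S)) (idx \<V> A))))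
     (free_pro \<V> A)"

text \<open>The continuous homomorphism induced by the inclusion B \<rightarrow> A: an implicit operation
  over B is evaluated on phi \<circ> i, which (as i is the inclusion) is phi itself.\<close>
definition incl_map :: "(nat, nat) sgd set \<Rightarrow> ('v, 'e) graph \<Rightarrow>
    ('v \<times> 'v \<times> ((nat, nat) sgd \<times> ('v, 'e) gmap \<Rightarrow> nat)) \<Rightarrow>
    ('v \<times> 'v \<times> ((nat, nat) sgd \<times> ('v, 'e) gmap \<Rightarrow> nat))" where
  "incl_map \<V> A x = (case x of (u, v, w) \<Rightarrow> (u, v, restrict w (idx \<V> A)))"

end

theory Submission
  imports Defs
begin

(* Let chi_B label the edges of B by 1 and the remaining edges of A by 0 in the two-element
   semilattice {0, 1}. Every w in Omega_B V has w(chi_B) = 1, since on B the labelling chi_B is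
   constant and factors through the one-element semigroupoid {1}. Conversely, w(chi_B) = 1
   makes the value of w in Omega_A V at phi depend only on phi restricted to the edges of B:
   evaluating w at (phi, phi', chi_B) in the subsemigroupoid of S x S x {0, 1} whose edges with
   last coordinate 1 are diagonal shows w(phi) = w(phi') when phi and phi' agree on B. Hence
   w(phi) = w(phi o r) for the retraction r, and phi |-> w(phi o r) is a preimage of w. So the
   image of Omega_B V is the set of w with source and range in B and w(chi_B) = 1, a basic open
   set. *)

(* Members of a pseudovariety have vertices and edges in nat, so products are re-encoded
   with prod_encode. *)
definition sgd_prod_nat :: "(nat, nat) sgd \<Rightarrow> (nat, nat) sgd \<Rightarrow> (nat, nat) sgd" where
  "sgd_prod_nat S T = \<lparr>sV = prod_encode ` (sV S \<times> sV T), sE = prod_encode ` (sE S \<times> sE T),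
    ssrc = (\<lambda>x. prod_encode (ssrc S (fst (prod_decode x)), ssrc T (snd (prod_decode x)))),
    stgt = (\<lambda>x. prod_encode (stgt S (fst (prod_decode x)), stgt T (snd (prod_decode x)))),
    scomp = (\<lambda>x y. prod_encode (scomp S (fst (prod_decode x)) (fst (prod_decode y)),
                                 scomp T (snd (prod_decode x)) (snd (prod_decode y))))\<rparr>"

lemma semigroupoid_sgd_prod_nat:
  "semigroupoid S \<Longrightarrow> semigroupoid T \<Longrightarrow> semigroupoid (sgd_prod_nat S T)"
  unfolding semigroupoid_def sgd_prod_nat_def by (simp add: image_iff)

lemma finite_sgd_prod_nat: "finite_sgd S \<Longrightarrow> finite_sgd T \<Longrightarrow> finite_sgd (sgd_prod_nat S T)"
  unfolding finite_sgd_def using semigroupoid_sgd_prod_nat by (auto simp: sgd_prod_nat_def)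

lemma sgd_iso_sgd_prod_nat: "sgd_iso (sgd_prod S T) (sgd_prod_nat S T)"
  unfolding sgd_iso_def
  by (rule exI[of _ "(prod_encode, prod_encode)"])
    (auto simp: sgd_hom_def graph_mor_def ugraph_def sgd_prod_def sgd_prod_nat_def
      inj_prod_encode bij_betw_def)

lemma sgd_prod_nat_in_pseudovariety:
  "pseudovariety V \<Longrightarrow> S \<in> V \<Longrightarrow> T \<in> V \<Longrightarrow> sgd_prod_nat S T \<in> V"
  unfolding pseudovariety_def using sgd_iso_sgd_prod_nat finite_sgd_prod_nat by meson

definition sgd_fst :: "(nat \<Rightarrow> nat) \<times> (nat \<Rightarrow> nat)" where
  "sgd_fst = (\<lambda>x. fst (prod_decode x), \<lambda>x. fst (prod_decode x))"

definition sgd_snd :: "(nat \<Rightarrow> nat) \<times> (nat \<Rightarrow> nat)" where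
  "sgd_snd = (\<lambda>x. snd (prod_decode x), \<lambda>x. snd (prod_decode x))"

lemma sgd_hom_sgd_fst: "sgd_hom (sgd_prod_nat S T) S sgd_fst"
  by (auto simp: sgd_hom_def graph_mor_def ugraph_def sgd_prod_nat_def sgd_fst_def)

lemma sgd_hom_sgd_snd: "sgd_hom (sgd_prod_nat S T) T sgd_snd"
  by (auto simp: sgd_hom_def graph_mor_def ugraph_def sgd_prod_nat_def sgd_snd_def)

definition gmap_pair :: "('v, 'e) gmap \<Rightarrow> ('v, 'e) gmap \<Rightarrow> ('v, 'e) gmap" where
  "gmap_pair \<phi> \<psi> =
     (\<lambda>x. prod_encode (fst \<phi> x, fst \<psi> x), \<lambda>x. prod_encode (snd \<phi> x, snd \<psi> x))"

lemma graph_mor_gmap_pair: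
  "graph_mor A (ugraph S) \<phi> \<Longrightarrow> graph_mor A (ugraph T) \<psi> \<Longrightarrow>
   graph_mor A (ugraph (sgd_prod_nat S T)) (gmap_pair \<phi> \<psi>)"
  by (auto simp: graph_mor_def ugraph_def sgd_prod_nat_def gmap_pair_def)

lemma hcomp_sgd_fst_gmap_pair [simp]: "hcomp sgd_fst (gmap_pair \<phi> \<psi>) = \<phi>"
  by (simp add: hcomp_def sgd_fst_def gmap_pair_def o_def)

lemma hcomp_sgd_snd_gmap_pair [simp]: "hcomp sgd_snd (gmap_pair \<phi> \<psi>) = \<psi>"
  by (simp add: hcomp_def sgd_snd_def gmap_pair_def o_def)

lemma hcomp_id [simp]: "hcomp (id, id) \<phi> = \<phi>"
  by (simp add: hcomp_def)

lemma graph_mor_hcomp: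
  "graph_mor A (ugraph S) \<phi> \<Longrightarrow> sgd_hom S T h \<Longrightarrow> graph_mor A (ugraph T) (hcomp h \<phi>)"
  by (auto simp: graph_mor_def sgd_hom_def hcomp_def ugraph_def)

lemma graph_mor_subgraph: "subgraph B A \<Longrightarrow> graph_mor A C \<phi> \<Longrightarrow> graph_mor B C \<phi>"
  by (auto simp: graph_mor_def subgraph_def)

lemma retract_subgraphE:
  assumes "retract_subgraph B A"
  obtains r where "subgraph B A" "graph_mor A B r"
    "\<And>x. x \<in> gV B \<Longrightarrow> fst r x = x" "\<And>e. e \<in> gE B \<Longrightarrow> snd r e = e"
  using assms unfolding retract_subgraph_def by (elim conjE exE) (rule that; blast)

definition precomp :: "('v \<Rightarrow> 'v) \<times> ('e \<Rightarrow> 'e) \<Rightarrow> ('v, 'e) gmap \<Rightarrow> ('v, 'e) gmap" where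
  "precomp r \<phi> = (fst \<phi> \<circ> fst r, snd \<phi> \<circ> snd r)"

lemma graph_mor_precomp: "graph_mor A B r \<Longrightarrow> graph_mor B C \<phi> \<Longrightarrow> graph_mor A C (precomp r \<phi>)"
  by (auto simp: graph_mor_def precomp_def)

lemma hcomp_precomp: "hcomp h (precomp r \<phi>) = precomp r (hcomp h \<phi>)"
  by (simp add: hcomp_def precomp_def o_assoc)

lemma sgd_hom_sub_sgd: "sub_sgd R T \<Longrightarrow> sgd_hom R T (id, id)"
  by (auto simp: sub_sgd_def sgd_hom_def graph_mor_def ugraph_def)

lemma sub_sgd_in_pseudovariety:
  assumes pv: "pseudovariety V" and T: "T \<in> V" and sub: "sub_sgd R T"
  shows "R \<in> V"
proof -
  have "finite_sgd T" using pv T unfolding pseudovariety_def by blast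
  then have fin: "finite_sgd R"
    using sub by (auto simp: finite_sgd_def sub_sgd_def intro: finite_subset)
  then have "sgd_hom R R (id, id)"
    by (intro sgd_hom_sub_sgd) (simp add: sub_sgd_def finite_sgd_def)
  then have "sgd_divides R T"
    unfolding sgd_divides_def using sub by (intro exI[of _ R] exI[of _ "(id, id)"]) simp
  then show ?thesis using pv T fin unfolding pseudovariety_def by blast
qed

lemma sub_sgd_restrict_edges:
  assumes "semigroupoid T" and "E \<subseteq> sE T"
    and "\<And>s t. s \<in> E \<Longrightarrow> t \<in> E \<Longrightarrow> stgt T s = ssrc T t \<Longrightarrow> scomp T s t \<in> E"
  shows "sub_sgd (T\<lparr>sE := E\<rparr>) T"
proof -
  have "e \<in> sE T" if "e \<in> E" for e using that assms(2) by blast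
  then show ?thesis using assms unfolding sub_sgd_def semigroupoid_def by simp
qed

definition sl2 :: "(nat, nat) sgd" where
  "sl2 = \<lparr>sV = {0}, sE = {0, 1}, ssrc = (\<lambda>_. 0), stgt = (\<lambda>_. 0), scomp = (*)\<rparr>"

lemma is_semilattice_sgd_sl2: "is_semilattice_sgd sl2"
  by (auto simp: is_semilattice_sgd_def finite_sgd_def semigroupoid_def sl2_def)

lemma sl2_in_if_contains_Sl: "contains_Sl V \<Longrightarrow> sl2 \<in> V"
  using is_semilattice_sgd_sl2 by (simp add: contains_Sl_def)

definition trivial_sgd :: "(nat, nat) sgd" where
  "trivial_sgd = \<lparr>sV = {0}, sE = {1}, ssrc = (\<lambda>_. 0), stgt = (\<lambda>_. 0), scomp = (*)\<rparr>"

lemma trivial_sgd_in_pseudovariety: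
  assumes "pseudovariety V"
  shows "trivial_sgd \<in> V"
proof -
  have "finite_sgd trivial_sgd" "card (sV trivial_sgd) = 1" "card (sE trivial_sgd) = 1"
    by (simp_all add: trivial_sgd_def finite_sgd_def semigroupoid_def)
  then show ?thesis using assms unfolding pseudovariety_def by blast
qed

lemma sgd_hom_trivial_sgd_sl2: "sgd_hom trivial_sgd sl2 (id, id)"
  by (auto simp: sgd_hom_def graph_mor_def ugraph_def trivial_sgd_def sl2_def)

definition edge_indicator :: "('v, 'e) graph \<Rightarrow> ('v, 'e) gmap" where
  "edge_indicator B = (\<lambda>_. 0, \<lambda>e. if e \<in> gE B then 1 else 0)"

lemma graph_mor_edge_indicator: "graph_mor A (ugraph sl2) (edge_indicator B)"
  by (auto simp: graph_mor_def ugraph_def sl2_def edge_indicator_def)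

definition equalizer_sgd :: "(nat, nat) sgd \<Rightarrow> (nat, nat) sgd" where
  "equalizer_sgd S = (sgd_prod_nat (sgd_prod_nat S S) sl2)\<lparr>sE :=
     {prod_encode (prod_encode (a, b), c) | a b c.
        a \<in> sE S \<and> b \<in> sE S \<and> c \<in> {0, 1} \<and> (c = 1 \<longrightarrow> a = b)}\<rparr>"

lemma sub_sgd_equalizer_sgd:
  assumes S: "semigroupoid S"
  shows "sub_sgd (equalizer_sgd S) (sgd_prod_nat (sgd_prod_nat S S) sl2)"
proof -
  let ?P = "sgd_prod_nat (sgd_prod_nat S S) sl2"
  let ?E = "{prod_encode (prod_encode (a, b), c) | a b c.
        a \<in> sE S \<and> b \<in> sE S \<and> c \<in> {0, 1} \<and> (c = 1 \<longrightarrow> a = b)}"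
  have "sub_sgd (?P\<lparr>sE := ?E\<rparr>) ?P"
  proof (rule sub_sgd_restrict_edges)
    show "semigroupoid ?P"
      using S is_semilattice_sgd_sl2
      by (simp add: semigroupoid_sgd_prod_nat is_semilattice_sgd_def finite_sgd_def)
  next
    show "?E \<subseteq> sE ?P"
      unfolding sgd_prod_nat_def sl2_def by (auto intro!: imageI)
  next
    fix s t assume "s \<in> ?E" "t \<in> ?E" and st: "stgt ?P s = ssrc ?P t"
    obtain a b c where
      s: "s = prod_encode (prod_encode (a, b), c)" "a \<in> sE S" "b \<in> sE S" "c \<in> {0, 1}"
        "c = 1 \<longrightarrow> a = b"
      using \<open>s \<in> ?E\<close> by force
    obtain a' b' c' where
      t: "t = prod_encode (prod_encode (a', b'), c')" "a' \<in> sE S" "b' \<in> sE S" "c' \<in> {0, 1}"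
        "c' = 1 \<longrightarrow> a' = b'"
      using \<open>t \<in> ?E\<close> by force
    have "stgt S a = ssrc S a'" "stgt S b = ssrc S b'"
      using st by (simp_all add: sgd_prod_nat_def s(1) t(1))
    then have "scomp S a a' \<in> sE S" "scomp S b b' \<in> sE S"
      using S s(2,3) t(2,3) by (simp_all add: semigroupoid_def)
    moreover have "c * c' \<in> {0, 1}" "c * c' = 1 \<longrightarrow> scomp S a a' = scomp S b b'"
      using s(4,5) t(4,5) by auto
    moreover have "scomp ?P s t = prod_encode (prod_encode (scomp S a a', scomp S b b'), c * c')"
      by (simp add: sgd_prod_nat_def sl2_def s(1) t(1))
    ultimately show "scomp ?P s t \<in> ?E"
      by blast
  qed
  then show ?thesis by (simp add: equalizer_sgd_def)
qed

lemma equalizer_sgd_in_pseudovariety: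
  assumes pv: "pseudovariety V" and S: "S \<in> V" and sl2: "sl2 \<in> V"
  shows "equalizer_sgd S \<in> V"
proof -
  have "semigroupoid S" using pv S unfolding pseudovariety_def finite_sgd_def by blast
  moreover have "sgd_prod_nat (sgd_prod_nat S S) sl2 \<in> V"
    using pv S sl2 by (intro sgd_prod_nat_in_pseudovariety)
  ultimately show ?thesis
    using pv sub_sgd_equalizer_sgd sub_sgd_in_pseudovariety by blast
qed

lemma mem_idx_iff: "(S, \<phi>) \<in> idx V A \<longleftrightarrow> S \<in> V \<and> graph_mor A (ugraph S) \<phi>"
  by (simp add: idx_def)

lemma idx_subgraph_subset: "subgraph B A \<Longrightarrow> idx V A \<subseteq> idx V B"
  using graph_mor_subgraph by (fastforce simp: idx_def)

lemma free_proD: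
  assumes "(u, v, w) \<in> free_pro V A"
  shows "u \<in> gV A" "v \<in> gV A" "w \<in> extensional (idx V A)"
    "\<And>S \<phi>. (S, \<phi>) \<in> idx V A \<Longrightarrow> w (S, \<phi>) \<in> sE S"
    "\<And>S \<phi>. (S, \<phi>) \<in> idx V A \<Longrightarrow> ssrc S (w (S, \<phi>)) = fst \<phi> u"
    "\<And>S \<phi>. (S, \<phi>) \<in> idx V A \<Longrightarrow> stgt S (w (S, \<phi>)) = fst \<phi> v"
    "\<And>S \<phi> \<psi>. (S, \<phi>) \<in> idx V A \<Longrightarrow> (S, \<psi>) \<in> idx V A \<Longrightarrow> agree_on A \<phi> \<psi> \<Longrightarrow>
      w (S, \<phi>) = w (S, \<psi>)"
    "\<And>S \<phi> T h. (S, \<phi>) \<in> idx V A \<Longrightarrow> T \<in> V \<Longrightarrow> sgd_hom S T h \<Longrightarrow>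
      snd h (w (S, \<phi>)) = w (T, hcomp h \<phi>)"
  using assms unfolding free_pro_def by fast+

lemma free_proI:
  assumes "u \<in> gV A" "v \<in> gV A" "w \<in> extensional (idx V A)"
    and "\<And>S \<phi>. (S, \<phi>) \<in> idx V A \<Longrightarrow>
      w (S, \<phi>) \<in> sE S \<and> ssrc S (w (S, \<phi>)) = fst \<phi> u \<and> stgt S (w (S, \<phi>)) = fst \<phi> v"
    and "\<And>S \<phi> \<psi>. (S, \<phi>) \<in> idx V A \<Longrightarrow> (S, \<psi>) \<in> idx V A \<Longrightarrow> agree_on A \<phi> \<psi> \<Longrightarrow>
      w (S, \<phi>) = w (S, \<psi>)"
    and "\<And>S \<phi> T h. (S, \<phi>) \<in> idx V A \<Longrightarrow> T \<in> V \<Longrightarrow> sgd_hom S T h \<Longrightarrow>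
      snd h (w (S, \<phi>)) = w (T, hcomp h \<phi>)"
  shows "(u, v, w) \<in> free_pro V A"
  using assms unfolding free_pro_def by blast

lemma free_pro_at_sgd_prod_nat:
  assumes x: "(u, v, w) \<in> free_pro V A" and P: "sgd_prod_nat S T \<in> V"
    and S: "(S, \<phi>) \<in> idx V A" and T: "(T, \<psi>) \<in> idx V A"
  shows "w (sgd_prod_nat S T, gmap_pair \<phi> \<psi>) = prod_encode (w (S, \<phi>), w (T, \<psi>))"
proof -
  have P_idx: "(sgd_prod_nat S T, gmap_pair \<phi> \<psi>) \<in> idx V A"
    using P S T by (simp add: mem_idx_iff graph_mor_gmap_pair)
  have "snd sgd_fst (w (sgd_prod_nat S T, gmap_pair \<phi> \<psi>)) = w (S, \<phi>)"
    using free_proD(8)[OF x P_idx _ sgd_hom_sgd_fst] S by (simp add: mem_idx_iff)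
  moreover have "snd sgd_snd (w (sgd_prod_nat S T, gmap_pair \<phi> \<psi>)) = w (T, \<psi>)"
    using free_proD(8)[OF x P_idx _ sgd_hom_sgd_snd] T by (simp add: mem_idx_iff)
  ultimately show ?thesis
    by (metis prod.collapse prod_decode_inverse sgd_fst_def sgd_snd_def snd_conv)
qed

lemma free_pro_eq_if_edges_agree:
  assumes pv: "pseudovariety V" and sl2: "sl2 \<in> V"
    and x: "(u, v, w) \<in> free_pro V A" and w1: "w (sl2, edge_indicator B) = 1"
    and \<phi>: "(S, \<phi>) \<in> idx V A" and \<phi>': "(S, \<phi>') \<in> idx V A"
    and agree: "\<And>e. e \<in> gE B \<Longrightarrow> snd \<phi> e = snd \<phi>' e"
  shows "w (S, \<phi>) = w (S, \<phi>')"
proof -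
  let ?SS = "sgd_prod_nat S S" and ?P = "sgd_prod_nat (sgd_prod_nat S S) sl2"
  let ?\<psi> = "gmap_pair (gmap_pair \<phi> \<phi>') (edge_indicator B)"
  have SV: "S \<in> V" using \<phi> by (simp add: mem_idx_iff)
  then have S: "semigroupoid S" using pv unfolding pseudovariety_def finite_sgd_def by blast
  have SS: "?SS \<in> V" and P: "?P \<in> V"
    using pv SV sl2 by (simp_all add: sgd_prod_nat_in_pseudovariety)
  have SS_idx: "(?SS, gmap_pair \<phi> \<phi>') \<in> idx V A"
    using SS \<phi> \<phi>' by (simp add: mem_idx_iff graph_mor_gmap_pair)
  have sl2_idx: "(sl2, edge_indicator B) \<in> idx V A"
    using sl2 by (simp add: mem_idx_iff graph_mor_edge_indicator)
  have P_value: "w (?P, ?\<psi>) = prod_encode (prod_encode (w (S, \<phi>), w (S, \<phi>')), 1)"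
    using free_pro_at_sgd_prod_nat[OF x P SS_idx sl2_idx] free_pro_at_sgd_prod_nat[OF x SS \<phi> \<phi>'] w1
    by simp
  have "graph_mor A (ugraph ?P) ?\<psi>"
    using SS_idx sl2_idx by (simp add: mem_idx_iff graph_mor_gmap_pair)
  moreover have "snd ?\<psi> e \<in> sE (equalizer_sgd S)" if "e \<in> gE A" for e
  proof -
    have "snd \<phi> e \<in> sE S" "snd \<phi>' e \<in> sE S"
      using \<phi> \<phi>' that by (auto simp: mem_idx_iff graph_mor_def ugraph_def)
    then show ?thesis
      using agree by (auto simp: equalizer_sgd_def gmap_pair_def edge_indicator_def)
  qed
  ultimately have "graph_mor A (ugraph (equalizer_sgd S)) ?\<psi>"
    by (simp add: graph_mor_def ugraph_def equalizer_sgd_def)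
  then have D_idx: "(equalizer_sgd S, ?\<psi>) \<in> idx V A"
    using equalizer_sgd_in_pseudovariety[OF pv SV sl2] by (simp add: mem_idx_iff)
  have "w (?P, ?\<psi>) = w (equalizer_sgd S, ?\<psi>)"
    using free_proD(8)[OF x D_idx P sgd_hom_sub_sgd[OF sub_sgd_equalizer_sgd[OF S]]] by simp
  then have "w (?P, ?\<psi>) \<in> sE (equalizer_sgd S)"
    using free_proD(4)[OF x D_idx] by simp
  then show ?thesis
    using P_value by (simp add: equalizer_sgd_def)
qed

lemma free_pro_edge_indicator_eq_one:
  assumes pv: "pseudovariety V" and sl2: "sl2 \<in> V" and x: "(u, v, w) \<in> free_pro V B"
  shows "w (sl2, edge_indicator B) = 1"
proof -
  let ?one = "(\<lambda>_. 0, \<lambda>_. 1) :: ('v, 'e) gmap"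
  have one_idx: "(trivial_sgd, ?one) \<in> idx V B"
    using trivial_sgd_in_pseudovariety[OF pv] by (simp add: mem_idx_iff graph_mor_def ugraph_def trivial_sgd_def)
  have "(sl2, edge_indicator B) \<in> idx V B" "(sl2, ?one) \<in> idx V B"
    using sl2 by (auto simp: mem_idx_iff graph_mor_def ugraph_def sl2_def edge_indicator_def)
  moreover have "agree_on B (edge_indicator B) ?one"
    by (simp add: agree_on_def edge_indicator_def)
  ultimately have "w (sl2, edge_indicator B) = w (sl2, ?one)"
    by (rule free_proD(7)[OF x])
  also have "\<dots> = w (trivial_sgd, ?one)"
    using free_proD(8)[OF x one_idx sl2 sgd_hom_trivial_sgd_sl2] by simp
  also have "\<dots> = 1"
    using free_proD(4)[OF x one_idx] by (simp add: trivial_sgd_def)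
  finally show ?thesis .
qed

lemma incl_map_in_free_pro:
  assumes sub: "subgraph B A" and x: "x \<in> free_pro V B"
  shows "incl_map V A x \<in> free_pro V A"
proof -
  obtain u v w where x_eq: "x = (u, v, w)" by (cases x)
  note x = x[unfolded x_eq]
  note idx_B = subsetD[OF idx_subgraph_subset[OF sub]]
  have "(u, v, restrict w (idx V A)) \<in> free_pro V A"
  proof (rule free_proI)
    show "u \<in> gV A" "v \<in> gV A"
      using free_proD(1,2)[OF x] sub by (auto simp: subgraph_def)
  next
    fix S \<phi> \<psi> assume "(S, \<phi>) \<in> idx V A" "(S, \<psi>) \<in> idx V A" "agree_on A \<phi> \<psi>"
    moreover have "agree_on B \<phi> \<psi>"
      using \<open>agree_on A \<phi> \<psi>\<close> sub by (auto simp: agree_on_def subgraph_def)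
    ultimately show "restrict w (idx V A) (S, \<phi>) = restrict w (idx V A) (S, \<psi>)"
      using free_proD(7)[OF x] idx_B by simp
  next
    fix S \<phi> T h assume "(S, \<phi>) \<in> idx V A" "T \<in> V" "sgd_hom S T h"
    moreover have "(T, hcomp h \<phi>) \<in> idx V A"
      using calculation graph_mor_hcomp unfolding mem_idx_iff by blast
    ultimately show "snd h (restrict w (idx V A) (S, \<phi>)) = restrict w (idx V A) (T, hcomp h \<phi>)"
      using free_proD(8)[OF x] idx_B by simp
  qed (use free_proD(4-6)[OF x] idx_B in auto)
  then show ?thesis by (simp add: x_eq incl_map_def)
qed

lemma retract_preimage_in_free_pro:
  assumes r: "graph_mor A B r" and r_V: "\<And>y. y \<in> gV B \<Longrightarrow> fst r y = y"
    and x: "(u, v, w) \<in> free_pro V A" and u: "u \<in> gV B" and v: "v \<in> gV B"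
  shows "(u, v, restrict (\<lambda>(S, \<phi>). w (S, precomp r \<phi>)) (idx V B)) \<in> free_pro V B"
    (is "(u, v, ?w') \<in> _")
proof -
  have idx_A: "(S, precomp r \<phi>) \<in> idx V A" if "(S, \<phi>) \<in> idx V B" for S \<phi>
    using that graph_mor_precomp[OF r] by (simp add: mem_idx_iff)
  show ?thesis
  proof (rule free_proI)
    fix S \<phi> assume "(S, \<phi>) \<in> idx V B"
    then show "?w' (S, \<phi>) \<in> sE S \<and> ssrc S (?w' (S, \<phi>)) = fst \<phi> u \<and> stgt S (?w' (S, \<phi>)) = fst \<phi> v"
      using free_proD(4-6)[OF x idx_A] u v r_V by (simp add: precomp_def)
  next
    fix S \<phi> \<psi> assume "(S, \<phi>) \<in> idx V B" "(S, \<psi>) \<in> idx V B" "agree_on B \<phi> \<psi>"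
    moreover have "agree_on A (precomp r \<phi>) (precomp r \<psi>)"
      using \<open>agree_on B \<phi> \<psi>\<close> r by (auto simp: agree_on_def precomp_def graph_mor_def)
    ultimately show "?w' (S, \<phi>) = ?w' (S, \<psi>)"
      using free_proD(7)[OF x] idx_A by simp
  next
    fix S \<phi> T h assume "(S, \<phi>) \<in> idx V B" "T \<in> V" "sgd_hom S T h"
    moreover have "(T, hcomp h \<phi>) \<in> idx V B"
      using calculation graph_mor_hcomp unfolding mem_idx_iff by blast
    ultimately show "snd h (?w' (S, \<phi>)) = ?w' (T, hcomp h \<phi>)"
      using free_proD(8)[OF x] idx_A by (simp add: hcomp_precomp)
  qed (simp_all add: u v)
qed

lemma incl_map_retract_preimage:
  assumes pv: "pseudovariety V" and sl2: "sl2 \<in> V" and sub: "subgraph B A"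
    and r: "graph_mor A B r" and r_E: "\<And>e. e \<in> gE B \<Longrightarrow> snd r e = e"
    and x: "(u, v, w) \<in> free_pro V A" and w1: "w (sl2, edge_indicator B) = 1"
  shows "incl_map V A (u, v, restrict (\<lambda>(S, \<phi>). w (S, precomp r \<phi>)) (idx V B)) = (u, v, w)"
proof -
  let ?w' = "restrict (\<lambda>(S, \<phi>). w (S, precomp r \<phi>)) (idx V B)"
  have w'_eq: "?w' (S, \<phi>) = w (S, \<phi>)" if k: "(S, \<phi>) \<in> idx V A" for S \<phi>
  proof -
    have k_B: "(S, \<phi>) \<in> idx V B"
      using k idx_subgraph_subset[OF sub] by blast
    then have "(S, precomp r \<phi>) \<in> idx V A"
      using graph_mor_precomp[OF r] by (simp add: mem_idx_iff)
    then have "w (S, precomp r \<phi>) = w (S, \<phi>)"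
      by (rule free_pro_eq_if_edges_agree[OF pv sl2 x w1 _ k]) (simp add: precomp_def r_E)
    then show ?thesis
      using k_B by simp
  qed
  have "restrict ?w' (idx V A) = w"
  proof (rule extensionalityI[OF restrict_extensional free_proD(3)[OF x]])
    fix k assume "k \<in> idx V A"
    then show "restrict ?w' (idx V A) k = w k"
      using w'_eq by (cases k) simp
  qed
  then show ?thesis
    by (simp add: incl_map_def)
qed

lemma incl_map_image_free_pro:
  assumes pv: "pseudovariety V" and sl2: "sl2 \<in> V" and retract: "retract_subgraph B A"
  shows "incl_map V A ` free_pro V B =
    {(u, v, w) \<in> free_pro V A. u \<in> gV B \<and> v \<in> gV B \<and> w (sl2, edge_indicator B) = 1}"
    (is "_ = ?Im")
proof
  obtain r where sub: "subgraph B A" and r: "graph_mor A B r"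
    and r_V: "\<And>y. y \<in> gV B \<Longrightarrow> fst r y = y" and r_E: "\<And>e. e \<in> gE B \<Longrightarrow> snd r e = e"
    using retract_subgraphE[OF retract] by blast
  show "incl_map V A ` free_pro V B \<subseteq> ?Im"
  proof
    fix y assume "y \<in> incl_map V A ` free_pro V B"
    then obtain u v w where x: "(u, v, w) \<in> free_pro V B" and y: "y = incl_map V A (u, v, w)"
      by (metis imageE prod_cases3)
    have "(sl2, edge_indicator B) \<in> idx V A"
      using sl2 by (simp add: mem_idx_iff graph_mor_edge_indicator)
    then show "y \<in> ?Im"
      using incl_map_in_free_pro[OF sub x] free_proD(1,2)[OF x]
        free_pro_edge_indicator_eq_one[OF pv sl2 x]
      by (simp add: y incl_map_def)
  qed
  show "?Im \<subseteq> incl_map V A ` free_pro V B"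
  proof
    fix y assume "y \<in> ?Im"
    then obtain u v w where y: "y = (u, v, w)" and x: "(u, v, w) \<in> free_pro V A"
      and u: "u \<in> gV B" and v: "v \<in> gV B" and w1: "w (sl2, edge_indicator B) = 1"
      by (cases y) simp
    let ?w' = "restrict (\<lambda>(S, \<phi>). w (S, precomp r \<phi>)) (idx V B)"
    have "y = incl_map V A (u, v, ?w')"
      using incl_map_retract_preimage[OF pv sl2 sub r r_E x w1] by (simp add: y)
    moreover have "(u, v, ?w') \<in> free_pro V B"
      using r r_V x u v by (rule retract_preimage_in_free_pro)
    ultimately show "y \<in> incl_map V A ` free_pro V B"
      by (rule image_eqI)
  qed
qed

lemma free_pro_subset_topspace:
  "free_pro V A \<subseteq>
    UNIV \<times> UNIV \<times> topspace (product_topology (\<lambda>(S, \<phi>). discrete_topology (sE S)) (idx V A))"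
  (is "_ \<subseteq> ?T")
proof
  fix x assume "x \<in> free_pro V A"
  moreover obtain u v w where "x = (u, v, w)" by (cases x)
  ultimately show "x \<in> ?T"
    by (force simp: PiE_iff dest: free_proD)
qed

lemma openin_free_pro_top_cylinder:
  assumes U1: "U1 \<subseteq> gV A" and U2: "U2 \<subseteq> gV A"
    and k: "(S, \<phi>) \<in> idx V A" and c: "c \<in> sE S"
  shows "openin (free_pro_top V A) {(u, v, w) \<in> free_pro V A. u \<in> U1 \<and> v \<in> U2 \<and> w (S, \<phi>) = c}"
proof -
  let ?X = "product_topology (\<lambda>(S, \<phi>). discrete_topology (sE S)) (idx V A)"
  let ?U = "U1 \<times> U2 \<times> {w \<in> topspace ?X. w (S, \<phi>) \<in> {c}}"
  have cylinder_eq: "{(u, v, w) \<in> F. u \<in> U1 \<and> v \<in> U2 \<and> w (S, \<phi>) = c} =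
      F \<inter> (U1 \<times> U2 \<times> {w \<in> T. w (S, \<phi>) \<in> {c}})" if "F \<subseteq> UNIV \<times> UNIV \<times> T" for F T
    using that by auto
  have "openin ?X {w \<in> topspace ?X. w (S, \<phi>) \<in> {c}}"
    by (rule openin_continuous_map_preimage[OF continuous_map_product_projection[OF k]])
      (simp add: c)
  then have "openin (prod_topology (discrete_topology (gV A))
      (prod_topology (discrete_topology (gV A)) ?X)) ?U"
    using U1 U2 by (simp add: openin_prod_Times_iff)
  moreover note cylinder_eq[OF free_pro_subset_topspace]
  ultimately show ?thesis
    unfolding free_pro_top_def openin_subtopology by blast
qed

theorem mainTheorem7:
  fixes \<V> :: "(nat, nat) sgd set" and A B :: "('v, 'e) graph"
  assumes "pseudovariety \<V>"
    and "contains_Sl \<V>"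
    and "finite_vertex_graph A"
    and "retract_subgraph B A"
  shows "openin (free_pro_top \<V> A) (incl_map \<V> A ` free_pro \<V> B)"
proof -
  have sl2: "sl2 \<in> \<V>"
    using assms(2) by (rule sl2_in_if_contains_Sl)
  have "gV B \<subseteq> gV A"
    using assms(4) by (simp add: retract_subgraph_def subgraph_def)
  moreover have "(sl2, edge_indicator B) \<in> idx \<V> A"
    using sl2 by (simp add: mem_idx_iff graph_mor_edge_indicator)
  ultimately have "openin (free_pro_top \<V> A)
      {(u, v, w) \<in> free_pro \<V> A. u \<in> gV B \<and> v \<in> gV B \<and> w (sl2, edge_indicator B) = 1}"
    by (intro openin_free_pro_top_cylinder) (simp_all add: sl2_def)
  then show ?thesis
    by (simp only: incl_map_image_free_pro[OF assms(1) sl2 assms(4)])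
qed

end
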